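(* Let $\mu:\Theta\to[0,\omega/B_{\min}]$ be a pacing function and define $\ell^\mu(w,B):=\min\big\{s\in\arg\min_{t\in[0,\omega/B_{\min}]}q^\mu(w,B,t)\big\}$ for $(w,B)\in\Theta$. Then (1) $\ell^\mu$ is non-decreasing in each component of $w$ (for fixed $B$ and fixed other components), and (2) $\ell^\mu$ is non-increasing in $B$ (for fixed $w$).
   Context: Setting. Fix integers $n\ge 2$ and $d\ge 2$, and constants $U>0$, $B_{\min}>0$. Buyer types are $\theta=(w,B)\in\Theta:=(0,U)^d\times(B_{\min},U)$; $\Theta_w:=(0,U)^d$. Item types are $\alpha\in A\subset\mathbb{R}^d_{+}$ (strictly positive orthant); all sets carry the Lebesgue $\sigma$-algebra. $F$ is a probability distribution on $A$ with a density and $G$ a probability distribution on $\Theta$ with a density. Buyer $(w,B)$ values item $\alpha$ at $w^T\alpha$; $\omega>0$ is a constant with $w^T\alpha\le\omega$ for all $w\in\Theta_w,\alpha\in A$. Reserve prices: measurable $r:A\to(0,\infty)$. A pacing function is a measurable $\mu:\Theta\to\mathbb{R}_{\ge0}$. For $\alpha\in A$, $\lambda^\mu_\alpha$ is the distribution of $w^T\alpha/(1+\mu(w,B))$ when $(w,B)\sim G$, and $H^\mu_\alpha$ the distribution of the maximum of $n-1$ i.i.d. draws from $\lambda^\mu_\alpha$; $H^\mu_\alpha(x):=\lambda^\mu_\alpha((-\infty,x])^{n-1}$. The dual function is $q^\mu(w,B,t):=(1+t)\,\mathbb{E}_{\alpha\sim F}\Big[\mathbf 1\Big\{\frac{w^T\alpha}{1+t}\ge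 r(\alpha)\Big\}\int_{r(\alpha)}^{\frac{w^T\alpha}{1+t}}H^\mu_\alpha(s)\,ds\Big]+tB$, for $t\ge0$; it is continuous in $t$, so the minimum defining $\ell^\mu$ exists. *)

theory Defs
  imports "HOL-Probability.Probability"
begin

definition Theta_w :: "real \<Rightarrow> (real ^ 'd) set" where
  "Theta_w U = {w. \<forall>i. 0 < w $ i \<and> w $ i < U}"

definition Theta :: "real \<Rightarrow> real \<Rightarrow> ((real ^ 'd) \<times> real) set" where
  "Theta U Bmin = {(w, B). w \<in> Theta_w U \<and> Bmin < B \<and> B < U}"

definition lam_cdf ::
  "((real ^ 'd) \<times> real) measure \<Rightarrow> ((real ^ 'd) \<times> real \<Rightarrow> real) \<Rightarrow> real ^ 'd \<Rightarrow> real \<Rightarrow> real" where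
  "lam_cdf G mu \<alpha> x = measure G {\<theta> \<in> space G. (fst \<theta> \<bullet> \<alpha>) / (1 + mu \<theta>) \<le> x}"

definition Hfun ::
  "nat \<Rightarrow> ((real ^ 'd) \<times> real) measure \<Rightarrow> ((real ^ 'd) \<times> real \<Rightarrow> real) \<Rightarrow> real ^ 'd \<Rightarrow> real \<Rightarrow> real" where
  "Hfun n G mu \<alpha> x = (lam_cdf G mu \<alpha> x) ^ (n - 1)"

definition qfun ::
  "nat \<Rightarrow> (real ^ 'd) measure \<Rightarrow> ((real ^ 'd) \<times> real) measure \<Rightarrow> (real ^ 'd \<Rightarrow> real)
   \<Rightarrow> ((real ^ 'd) \<times> real \<Rightarrow> real) \<Rightarrow> real ^ 'd \<Rightarrow> real \<Rightarrow> real \<Rightarrow> real" where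
  "qfun n F G r mu w B t =
     (1 + t) * (\<integral>\<alpha>. (if (w \<bullet> \<alpha>) / (1 + t) \<ge> r \<alpha>
                       then (LBINT s = r \<alpha> .. (w \<bullet> \<alpha>) / (1 + t). Hfun n G mu \<alpha> s)
                       else 0) \<partial>F)
     + t * B"

definition ell ::
  "nat \<Rightarrow> (real ^ 'd) measure \<Rightarrow> ((real ^ 'd) \<times> real) measure \<Rightarrow> (real ^ 'd \<Rightarrow> real)
   \<Rightarrow> ((real ^ 'd) \<times> real \<Rightarrow> real) \<Rightarrow> real \<Rightarrow> real \<Rightarrow> real ^ 'd \<Rightarrow> real \<Rightarrow> real" where
  "ell n F G r mu \<omega> Bmin w B =
     (LEAST s. s \<in> {0 .. \<omega> / Bmin} \<and>
        (\<forall>t \<in> {0 .. \<omega> / Bmin}. qfun n F G r mu w B s \<le> qfun n F G r mu w B t))"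

end

(* Write the dual function as q(w,B,t) = (1 + t) E_F[u_a(w.a/(1 + t))] + t B, where
   u_a(x) is the integral of H_a from r(a) to x: the expected utility of a bidder with value x
   in a second-price auction with reserve r(a).  Since H_a is monotone with values in [0,1],
   u_a is convex and 1-Lipschitz, so q is continuous in t and least minimisers exist.
   Raising B adds t (B' - B), which grows with t, so the least minimiser can only drop.
   Raising a weight raises every value w.a, and convexity of u_a makes the perspective
   increment (1 + t)(u_a(v'/(1 + t)) - u_a(v/(1 + t))) antitone in t for v <= v'; hence
   q(w',B,.) - q(w,B,.) is antitone and, as in Topkis' theorem, the least minimiser can only rise. *)

theory Submission
  imports Defs
begin

lemma mono_interval_integrable:
  fixes h :: "real \<Rightarrow> real"
  assumes h: "mono h" and ab: "a \<le> b"
  shows "interval_lebesgue_integrable lborel (ereal a) (ereal b) h"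
proof -
  have "set_integrable lborel (einterval a b) h"
    unfolding set_integrable_def
  proof (rule integrableI_bounded_set_indicator[where B = "max \<bar>h a\<bar> \<bar>h b\<bar>"])
    show "h \<in> borel_measurable lborel" using borel_measurable_mono[OF h] by simp
    show "AE s in lborel. s \<in> einterval a b \<longrightarrow> norm (h s) \<le> max \<bar>h a\<bar> \<bar>h b\<bar>"
    proof (rule AE_I2, rule impI)
      fix s assume "s \<in> einterval a b"
      then have "h a \<le> h s" "h s \<le> h b" by (auto simp: einterval_iff intro: monoD[OF h])
      then show "norm (h s) \<le> max \<bar>h a\<bar> \<bar>h b\<bar>" by auto
    qed
  qed (use ab in \<open>auto simp: einterval_eq\<close>)
  then show ?thesis using ab by (simp add: interval_lebesgue_integrable_def)
qed

lemma mono_interval_integral_bounds: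
  fixes h :: "real \<Rightarrow> real"
  assumes h: "mono h" and ab: "a \<le> b"
  shows "(b - a) * h a \<le> (LBINT s = a..b. h s)" and "(LBINT s = a..b. h s) \<le> (b - a) * h b"
proof -
  have I: "set_integrable lborel (einterval a b) h"
    using mono_interval_integrable[OF h ab] ab by (simp add: interval_lebesgue_integrable_def)
  have C: "set_integrable lborel (einterval a b) (\<lambda>s. c)" for c :: real
    using interval_integral_const(1)[of a b c] ab by (simp add: interval_lebesgue_integrable_def)
  have const: "(LINT s:einterval a b|lborel. c) = c * (b - a)" for c
    using interval_integral_const(2)[of a b c]
    unfolding interval_lebesgue_integral_le_eq[OF ereal_less_eq(3)[THEN iffD2, OF ab]] .
  have eq: "(LBINT s = a..b. h s) = (LINT s:einterval a b|lborel. h s)"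
    using ab by (simp only: interval_lebesgue_integral_le_eq ereal_less_eq(3))
  have "(LINT s:einterval a b|lborel. h a) \<le> (LINT s:einterval a b|lborel. h s)"
    by (rule set_integral_mono[OF C I]) (auto simp: einterval_iff intro: monoD[OF h])
  then show "(b - a) * h a \<le> (LBINT s = a..b. h s)"
    unfolding eq const by (simp only: mult.commute)
  have "(LINT s:einterval a b|lborel. h s) \<le> (LINT s:einterval a b|lborel. h b)"
    by (rule set_integral_mono[OF I C]) (auto simp: einterval_iff intro: monoD[OF h])
  then show "(LBINT s = a..b. h s) \<le> (b - a) * h b"
    unfolding eq const by (simp only: mult.commute)
qed

definition integral_from :: "(real \<Rightarrow> real) \<Rightarrow> real \<Rightarrow> real \<Rightarrow> real" where
  "integral_from h r x = (if r \<le> x then (LBINT s = r..x. h s) else 0)"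

lemma integral_from_increment_bounds:
  fixes h :: "real \<Rightarrow> real"
  assumes h: "mono h" and h_nonneg: "\<And>s. 0 \<le> h s" and ab: "a \<le> b"
  shows "(b - a) * (if r \<le> a then h a else 0) \<le> integral_from h r b - integral_from h r a"
    and "integral_from h r b - integral_from h r a \<le> (b - a) * (if r \<le> b then h b else 0)"
proof -
  consider "r \<le> a" | "a < r" "r \<le> b" | "b < r" using ab by linarith
  then have "(b - a) * (if r \<le> a then h a else 0) \<le> integral_from h r b - integral_from h r a \<and>
      integral_from h r b - integral_from h r a \<le> (b - a) * (if r \<le> b then h b else 0)"
  proof cases
    case 1
    have "(LBINT s = r..a. h s) + (LBINT s = a..b. h s) = (LBINT s = r..b. h s)"
      by (rule interval_integral_sum)
        (use 1 ab in \<open>auto intro!: mono_interval_integrable[OF h] simp: min_def max_def\<close>)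
    then show ?thesis using 1 ab mono_interval_integral_bounds[OF h ab] by (simp add: integral_from_def)
  next
    case 2
    have "0 \<le> (b - r) * h r" "(b - r) * h b \<le> (b - a) * h b"
      using 2 h_nonneg[of r] h_nonneg[of b] by (auto intro: mult_right_mono)
    then show ?thesis
      using 2 mono_interval_integral_bounds[OF h \<open>r \<le> b\<close>] by (simp add: integral_from_def)
  next
    case 3
    then show ?thesis using ab by (simp add: integral_from_def)
  qed
  then show "(b - a) * (if r \<le> a then h a else 0) \<le> integral_from h r b - integral_from h r a"
    and "integral_from h r b - integral_from h r a \<le> (b - a) * (if r \<le> b then h b else 0)"
    by auto
qed

lemma integral_from_lipschitz:
  fixes h :: "real \<Rightarrow> real"
  assumes h: "mono h" and h_bounds: "\<And>s. 0 \<le> h s \<and> h s \<le> C"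
  shows "C-lipschitz_on UNIV (integral_from h r)"
proof -
  have incr: "\<bar>integral_from h r b - integral_from h r a\<bar> \<le> C * (b - a)" if "a \<le> b" for a b
  proof -
    have "0 \<le> (b - a) * (if r \<le> a then h a else 0)" "(b - a) * (if r \<le> b then h b else 0) \<le> C * (b - a)"
      using that h_bounds[of a] h_bounds[of b] by (auto simp: mult.commute intro: mult_right_mono)
    then show ?thesis
      using integral_from_increment_bounds[OF h _ that, of r] h_bounds by (auto simp: abs_le_iff)
  qed
  show ?thesis
  proof (rule lipschitz_onI)
    fix x y :: real
    show "dist (integral_from h r x) (integral_from h r y) \<le> C * dist x y"
      using incr[of x y] incr[of y x] by (cases "x \<le> y") (auto simp: dist_real_def abs_minus_commute)
  qed (use h_bounds[of 0] in auto)
qed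

lemma chord_slope_mono_right:
  fixes P k :: "real \<Rightarrow> real"
  assumes K: "\<And>a b. a \<le> b \<Longrightarrow> (b - a) * k a \<le> P b - P a \<and> P b - P a \<le> (b - a) * k b"
    and ab: "a < b" and bb': "b \<le> b'"
  shows "(P b - P a) / (b - a) \<le> (P b' - P a) / (b' - a)"
proof -
  have "(P b - P a) * (b' - b) \<le> (b - a) * k b * (b' - b)"
    using K[of a b] ab bb' by (intro mult_right_mono) auto
  also have "\<dots> = (b - a) * ((b' - b) * k b)" by simp
  also have "\<dots> \<le> (b - a) * (P b' - P b)"
    using K[of b b'] ab bb' by (intro mult_left_mono) auto
  finally have "(P b - P a) * (b' - a) \<le> (P b' - P a) * (b - a)" by (simp add: algebra_simps)
  then show ?thesis using ab bb' by (simp add: divide_simps)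
qed

lemma chord_slope_mono_left:
  fixes P k :: "real \<Rightarrow> real"
  assumes K: "\<And>a b. a \<le> b \<Longrightarrow> (b - a) * k a \<le> P b - P a \<and> P b - P a \<le> (b - a) * k b"
    and aa': "a \<le> a'" and a'b: "a' < b"
  shows "(P b - P a) / (b - a) \<le> (P b - P a') / (b - a')"
proof -
  have "(P a' - P a) * (b - a') \<le> (a' - a) * k a' * (b - a')"
    using K[of a a'] aa' a'b by (intro mult_right_mono) auto
  also have "\<dots> = (a' - a) * ((b - a') * k a')" by simp
  also have "\<dots> \<le> (a' - a) * (P b - P a')"
    using K[of a' b] aa' a'b by (intro mult_left_mono) auto
  finally have "(P b - P a) * (b - a') \<le> (P b - P a') * (b - a)" by (simp add: algebra_simps)
  then show ?thesis using aa' a'b by (simp add: divide_simps)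
qed

text \<open>The hypothesis on \<open>k\<close> makes \<open>P\<close> convex.  The increment is \<open>v' - v\<close> times the
  slope of \<open>P\<close> on \<open>[v/c, v'/c]\<close>, a chord whose endpoints both move left as \<open>c\<close> grows.\<close>
lemma perspective_increment_antimono:
  fixes P k :: "real \<Rightarrow> real"
  assumes K: "\<And>a b. a \<le> b \<Longrightarrow> (b - a) * k a \<le> P b - P a \<and> P b - P a \<le> (b - a) * k b"
    and v: "0 \<le> v" "v \<le> v'" and c: "0 < c" "c \<le> c'"
  shows "c' * (P (v' / c') - P (v / c')) \<le> c * (P (v' / c) - P (v / c))"
proof (cases "v = v'")
  case False
  with v have vv': "v < v'" by simp
  have c': "0 < c'" using c by simp
  have lt: "v / c' < v' / c'" "v / c < v' / c"
    using vv' c c' by (simp_all add: divide_strict_right_mono)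
  have le: "v / c' \<le> v / c" "v' / c' \<le> v' / c"
    using v c by (auto intro!: divide_left_mono mult_pos_pos)
  have "(P (v' / c') - P (v / c')) / (v' / c' - v / c') \<le> (P (v' / c) - P (v / c')) / (v' / c - v / c')"
    by (rule chord_slope_mono_right[OF K lt(1) le(2)])
  also have "\<dots> \<le> (P (v' / c) - P (v / c)) / (v' / c - v / c)"
    by (rule chord_slope_mono_left[OF K le(1) lt(2)])
  finally have slope: "(P (v' / c') - P (v / c')) / ((v' - v) / c') \<le> (P (v' / c) - P (v / c)) / ((v' - v) / c)"
    by (simp add: diff_divide_distrib)
  have scale: "x * (P (v' / x) - P (v / x)) = (v' - v) * ((P (v' / x) - P (v / x)) / ((v' - v) / x))"
    if "0 < x" for x
    using that vv' by (simp add: field_simps)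
  show ?thesis
    unfolding scale[OF c'] scale[OF c(1)] using slope vv' by (intro mult_left_mono) auto
qed simp

definition least_argmin :: "real set \<Rightarrow> (real \<Rightarrow> real) \<Rightarrow> real" where
  "least_argmin S f = (LEAST s. s \<in> S \<and> (\<forall>t \<in> S. f s \<le> f t))"

lemma least_argmin:
  fixes f :: "real \<Rightarrow> real"
  assumes S: "compact S" "S \<noteq> {}" and f: "continuous_on S f"
  shows least_argmin_in: "least_argmin S f \<in> S"
    and least_argmin_le: "\<And>t. t \<in> S \<Longrightarrow> f (least_argmin S f) \<le> f t"
    and least_argmin_least: "\<And>s. s \<in> S \<Longrightarrow> (\<forall>t \<in> S. f s \<le> f t) \<Longrightarrow> least_argmin S f \<le> s"
proof -
  obtain s0 where s0: "s0 \<in> S" "\<forall>t \<in> S. f s0 \<le> f t"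
    using continuous_attains_inf[OF S f] by blast
  define M where "M = {s \<in> S. \<forall>t \<in> S. f s \<le> f t}"
  have "M = S \<inter> f -` {..f s0}"
    using s0 unfolding M_def by (auto intro: order_trans)
  then have "closed M"
    using continuous_closed_preimage[OF f compact_imp_closed[OF S(1)]] by auto
  moreover have "M \<noteq> {}" using s0 by (auto simp: M_def)
  moreover have bdd: "bdd_below M"
    by (rule bdd_below_mono[OF bounded_imp_bdd_below[OF compact_imp_bounded[OF S(1)]]]) (auto simp: M_def)
  ultimately have inf: "Inf M \<in> M" by (rule closed_contains_Inf[rotated 2])
  have "least_argmin S f = Inf M"
    unfolding least_argmin_def
    by (rule Least_equality) (use inf bdd in \<open>auto simp: M_def intro: cInf_lower\<close>)
  then show "least_argmin S f \<in> S" "\<And>t. t \<in> S \<Longrightarrow> f (least_argmin S f) \<le> f t"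
    "\<And>s. s \<in> S \<Longrightarrow> (\<forall>t \<in> S. f s \<le> f t) \<Longrightarrow> least_argmin S f \<le> s"
    using inf bdd by (auto simp: M_def intro: cInf_lower)
qed

lemma least_argmin_mono:
  fixes f g :: "real \<Rightarrow> real"
  assumes S: "compact S" "S \<noteq> {}" and f: "continuous_on S f" and g: "continuous_on S g"
    and dd: "\<And>s t. s \<in> S \<Longrightarrow> t \<in> S \<Longrightarrow> s \<le> t \<Longrightarrow> g t - f t \<le> g s - f s"
  shows "least_argmin S f \<le> least_argmin S g"
proof (rule ccontr)
  let ?s = "least_argmin S g" and ?t = "least_argmin S f"
  assume "\<not> ?t \<le> ?s"
  then have "?s \<le> ?t" by simp
  have s: "?s \<in> S" and t: "?t \<in> S" using least_argmin_in S f g by auto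
  have "f ?s \<le> f t'" if "t' \<in> S" for t'
    using dd[OF s t \<open>?s \<le> ?t\<close>] least_argmin_le[OF S g t] least_argmin_le[OF S f that] by linarith
  then have "?t \<le> ?s" using least_argmin_least[OF S f s] by blast
  with \<open>\<not> ?t \<le> ?s\<close> show False by simp
qed

lemma abs_divide_one_plus_diff_le:
  fixes v t t' :: real
  assumes "0 \<le> t" "0 \<le> t'"
  shows "\<bar>v / (1 + t) - v / (1 + t')\<bar> \<le> \<bar>v\<bar> * \<bar>t - t'\<bar>"
proof -
  have "v / (1 + t) - v / (1 + t') = v * (t' - t) / ((1 + t) * (1 + t'))"
    using assms by (simp add: field_simps)
  then have "\<bar>v / (1 + t) - v / (1 + t')\<bar> = \<bar>v\<bar> * \<bar>t - t'\<bar> / ((1 + t) * (1 + t'))"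
    using assms by (simp add: abs_mult abs_minus_commute)
  also have "\<dots> \<le> \<bar>v\<bar> * \<bar>t - t'\<bar> / 1"
    using assms mult_mono[of 1 "1 + t" 1 "1 + t'"] by (intro divide_left_mono) auto
  finally show ?thesis by simp
qed

lemma inner_vec_mono:
  fixes w w' \<alpha> :: "real ^ 'n"
  assumes "\<And>i. w $ i \<le> w' $ i" and "\<And>i. 0 \<le> \<alpha> $ i"
  shows "w \<bullet> \<alpha> \<le> w' \<bullet> \<alpha>"
  unfolding inner_vec_def using assms by (intro sum_mono) (simp add: mult_right_mono)

lemma borel_measurable_lebesgue_on:
  "f \<in> borel_measurable borel \<Longrightarrow> f \<in> borel_measurable (lebesgue_on S)"
  by (intro measurable_restrict_space1 measurable_completion)
    (simp add: measurable_cong_sets[OF sets_lborel refl])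

locale pacing_model =
  fixes n :: nat and F :: "(real ^ 'd) measure" and G :: "((real ^ 'd) \<times> real) measure"
    and r :: "real ^ 'd \<Rightarrow> real" and mu :: "(real ^ 'd) \<times> real \<Rightarrow> real"
    and A :: "(real ^ 'd) set" and Th :: "((real ^ 'd) \<times> real) set"
  assumes F_prob: "prob_space F" and sets_F: "sets F = sets (lebesgue_on A)"
    and G_prob: "prob_space G" and sets_G: "sets G = sets (lebesgue_on Th)"
    and mu_measurable: "mu \<in> borel_measurable (lebesgue_on Th)"
    and r_measurable: "r \<in> borel_measurable (lebesgue_on A)"
    and r_pos: "\<And>\<alpha>. \<alpha> \<in> A \<Longrightarrow> 0 < r \<alpha>"
begin

sublocale F: prob_space F by (rule F_prob)
sublocale G: prob_space G by (rule G_prob)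

lemma space_F: "space F = A"
  using sets_eq_imp_space_eq[OF sets_F] by simp

lemma mu_measurable_G [measurable]: "mu \<in> borel_measurable G"
  by (subst measurable_cong_sets[OF sets_G refl]) (rule mu_measurable)

lemma fst_measurable_G [measurable]: "fst \<in> borel_measurable G"
  by (subst measurable_cong_sets[OF sets_G refl])
    (intro borel_measurable_lebesgue_on borel_measurable_continuous_onI continuous_intros)

lemma Hfun_mono: "mono (Hfun n G mu \<alpha>)"
proof -
  have "{\<theta> \<in> space G. (fst \<theta> \<bullet> \<alpha>) / (1 + mu \<theta>) \<le> x} \<in> sets G" for x
    by measurable
  then have "lam_cdf G mu \<alpha> x \<le> lam_cdf G mu \<alpha> y" if "x \<le> y" for x y
    unfolding lam_cdf_def using that by (intro G.finite_measure_mono) auto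
  then show ?thesis
    unfolding Hfun_def by (intro monoI power_mono) (auto simp: lam_cdf_def)
qed

lemma Hfun_bounds: "0 \<le> Hfun n G mu \<alpha> s \<and> Hfun n G mu \<alpha> s \<le> 1"
  unfolding Hfun_def lam_cdf_def by (auto intro: power_le_one)

lemma Hfun_measurable: "(\<lambda>(\<alpha>, s). Hfun n G mu \<alpha> s) \<in> borel_measurable (lebesgue_on A \<Otimes>\<^sub>M lborel)"
proof -
  let ?N = "lebesgue_on A \<Otimes>\<^sub>M lborel"
  have [measurable]: "(\<lambda>x::real ^ 'd. x) \<in> borel_measurable (lebesgue_on A)"
    by (rule borel_measurable_lebesgue_on) simp
  have "{x \<in> space (?N \<Otimes>\<^sub>M G).
      snd x \<in> {\<theta> \<in> space G. (fst \<theta> \<bullet> fst (fst x)) / (1 + mu \<theta>) \<le> snd (fst x)}} \<in> sets (?N \<Otimes>\<^sub>M G)"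
    by measurable
  then have "(\<lambda>p. emeasure G {\<theta> \<in> space G. (fst \<theta> \<bullet> fst p) / (1 + mu \<theta>) \<le> snd p}) \<in> borel_measurable ?N"
    by (intro G.measurable_emeasure) auto
  then have "(\<lambda>p. (enn2real (emeasure G {\<theta> \<in> space G. (fst \<theta> \<bullet> fst p) / (1 + mu \<theta>) \<le> snd p})) ^ (n - 1))
      \<in> borel_measurable ?N"
    by measurable
  then show ?thesis
    by (simp add: Hfun_def lam_cdf_def measure_def case_prod_beta')
qed

definition utility :: "real ^ 'd \<Rightarrow> real \<Rightarrow> real" where
  "utility \<alpha> = integral_from (Hfun n G mu \<alpha>) (r \<alpha>)"

definition mean_utility :: "real ^ 'd \<Rightarrow> real \<Rightarrow> real" where
  "mean_utility w t = (\<integral>\<alpha>. utility \<alpha> ((w \<bullet> \<alpha>) / (1 + t)) \<partial>F)"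

lemma qfun_eq_mean_utility: "qfun n F G r mu w B t = (1 + t) * mean_utility w t + t * B"
  by (simp add: qfun_def mean_utility_def utility_def integral_from_def)

lemma utility_lipschitz: "1-lipschitz_on UNIV (utility \<alpha>)"
  unfolding utility_def by (rule integral_from_lipschitz[OF Hfun_mono Hfun_bounds])

lemma abs_utility_le:
  assumes "\<alpha> \<in> A" shows "\<bar>utility \<alpha> x\<bar> \<le> \<bar>x\<bar>"
proof -
  have "utility \<alpha> 0 = 0" using r_pos[OF assms] by (simp add: utility_def integral_from_def)
  then show ?thesis
    using lipschitz_onD[OF utility_lipschitz[of \<alpha>], of x 0] by (simp add: dist_real_def)
qed

lemma utility_measurable:
  "(\<lambda>\<alpha>. utility \<alpha> ((w \<bullet> \<alpha>) / (1 + t))) \<in> borel_measurable F"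
proof -
  let ?N = "lebesgue_on A \<Otimes>\<^sub>M lborel"
  let ?x = "\<lambda>\<alpha>::real ^ 'd. (w \<bullet> \<alpha>) / (1 + t)"
  have [measurable]: "?x \<in> borel_measurable (lebesgue_on A)"
    by (intro borel_measurable_lebesgue_on) measurable
  have [measurable]: "r \<in> borel_measurable (lebesgue_on A)" by (rule r_measurable)
  have "(\<lambda>p. Hfun n G mu (fst p) (snd p)) \<in> borel_measurable ?N"
    using Hfun_measurable by (simp add: case_prod_beta')
  then have [measurable]: "(\<lambda>p. Hfun n G mu (fst p) (snd p)) \<in> borel_measurable (lebesgue_on A \<Otimes>\<^sub>M borel)"
    by (subst measurable_cong_sets[OF sets_pair_measure_cong[OF refl sets_lborel[symmetric]] refl])
  have "(\<lambda>(\<alpha>, s). indicator (einterval (r \<alpha>) (?x \<alpha>)) s *\<^sub>R Hfun n G mu \<alpha> s) \<in> borel_measurable ?N"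
    unfolding case_prod_beta' einterval_eq indicator_def greaterThanLessThan_iff mem_Collect_eq
    by measurable
  then have [measurable]: "(\<lambda>\<alpha>. \<integral>s. indicator (einterval (r \<alpha>) (?x \<alpha>)) s *\<^sub>R Hfun n G mu \<alpha> s \<partial>lborel)
      \<in> borel_measurable (lebesgue_on A)"
    by (rule lborel.borel_measurable_lebesgue_integral)
  have "(\<lambda>\<alpha>. if r \<alpha> \<le> ?x \<alpha>
          then \<integral>s. indicator (einterval (r \<alpha>) (?x \<alpha>)) s *\<^sub>R Hfun n G mu \<alpha> s \<partial>lborel else 0)
      \<in> borel_measurable (lebesgue_on A)"
    by measurable
  then show ?thesis
    by (subst measurable_cong_sets[OF sets_F refl])
      (simp add: utility_def integral_from_def interval_lebesgue_integral_le_eq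
        set_lebesgue_integral_def cong: if_cong)
qed

lemma utility_integrable:
  assumes "\<And>\<alpha>. \<alpha> \<in> A \<Longrightarrow> \<bar>w \<bullet> \<alpha>\<bar> \<le> \<omega>" and "0 \<le> t"
  shows "integrable F (\<lambda>\<alpha>. utility \<alpha> ((w \<bullet> \<alpha>) / (1 + t)))"
proof (rule F.integrable_const_bound[where B = \<omega>])
  have "\<bar>utility \<alpha> ((w \<bullet> \<alpha>) / (1 + t))\<bar> \<le> \<omega>" if "\<alpha> \<in> A" for \<alpha>
  proof -
    have "\<bar>(w \<bullet> \<alpha>) / (1 + t)\<bar> \<le> \<bar>w \<bullet> \<alpha>\<bar>"
      using \<open>0 \<le> t\<close> by (simp add: abs_divide divide_le_eq mult_le_cancel_left1)
    then show ?thesis using abs_utility_le[OF that, of "(w \<bullet> \<alpha>) / (1 + t)"] assms(1)[OF that] by linarith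
  qed
  then show "AE \<alpha> in F. norm (utility \<alpha> ((w \<bullet> \<alpha>) / (1 + t))) \<le> \<omega>"
    by (intro AE_I2) (simp add: space_F)
qed (rule utility_measurable)

lemma mean_utility_lipschitz:
  assumes w: "\<And>\<alpha>. \<alpha> \<in> A \<Longrightarrow> \<bar>w \<bullet> \<alpha>\<bar> \<le> \<omega>" and "0 \<le> \<omega>"
  shows "\<omega>-lipschitz_on {0..} (mean_utility w)"
proof (rule lipschitz_onI)
  fix t t' :: real assume t: "t \<in> {0..}" "t' \<in> {0..}"
  let ?u = "\<lambda>t \<alpha>. utility \<alpha> ((w \<bullet> \<alpha>) / (1 + t))"
  have "\<bar>?u t \<alpha> - ?u t' \<alpha>\<bar> \<le> \<omega> * \<bar>t - t'\<bar>" if "\<alpha> \<in> A" for \<alpha>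
  proof -
    have "\<bar>?u t \<alpha> - ?u t' \<alpha>\<bar> \<le> \<bar>(w \<bullet> \<alpha>) / (1 + t) - (w \<bullet> \<alpha>) / (1 + t')\<bar>"
      using lipschitz_onD[OF utility_lipschitz] by (simp add: dist_real_def)
    also have "\<dots> \<le> \<bar>w \<bullet> \<alpha>\<bar> * \<bar>t - t'\<bar>"
      using t by (intro abs_divide_one_plus_diff_le) auto
    also have "\<dots> \<le> \<omega> * \<bar>t - t'\<bar>" using w[OF that] by (intro mult_right_mono) auto
    finally show ?thesis .
  qed
  then have "\<bar>\<integral>\<alpha>. ?u t \<alpha> - ?u t' \<alpha> \<partial>F\<bar> \<le> (\<integral>\<alpha>. \<omega> * \<bar>t - t'\<bar> \<partial>F)"
    using utility_integrable[OF w] t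
    by (intro integral_abs_bound_integral) (auto simp: space_F)
  then show "dist (mean_utility w t) (mean_utility w t') \<le> \<omega> * dist t t'"
    using utility_integrable[OF w] t
    by (simp add: mean_utility_def dist_real_def F.prob_space)
qed fact

lemma qfun_continuous_on:
  assumes "\<And>\<alpha>. \<alpha> \<in> A \<Longrightarrow> \<bar>w \<bullet> \<alpha>\<bar> \<le> \<omega>" and "0 \<le> \<omega>"
  shows "continuous_on {0..} (qfun n F G r mu w B)"
  unfolding qfun_eq_mean_utility[abs_def]
  by (intro continuous_intros lipschitz_on_continuous_on[OF mean_utility_lipschitz[OF assms]])

lemma qfun_antitone_differences:
  assumes w: "\<And>\<alpha>. \<alpha> \<in> A \<Longrightarrow> 0 \<le> w \<bullet> \<alpha> \<and> w \<bullet> \<alpha> \<le> w' \<bullet> \<alpha> \<and> w' \<bullet> \<alpha> \<le> \<omega>"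
    and t: "0 \<le> t" "t \<le> t'"
  shows "qfun n F G r mu w' B t' - qfun n F G r mu w B t' \<le> qfun n F G r mu w' B t - qfun n F G r mu w B t"
proof -
  let ?d = "\<lambda>s \<alpha>. (1 + s) * (utility \<alpha> ((w' \<bullet> \<alpha>) / (1 + s)) - utility \<alpha> ((w \<bullet> \<alpha>) / (1 + s)))"
  have bound: "\<And>\<alpha>. \<alpha> \<in> A \<Longrightarrow> \<bar>w \<bullet> \<alpha>\<bar> \<le> \<omega>" "\<And>\<alpha>. \<alpha> \<in> A \<Longrightarrow> \<bar>w' \<bullet> \<alpha>\<bar> \<le> \<omega>"
    using w by fastforce+
  have integrable: "integrable F (?d s)" if "0 \<le> s" for s
    using utility_integrable[OF bound(1) that] utility_integrable[OF bound(2) that] by auto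
  have diff: "qfun n F G r mu w' B s - qfun n F G r mu w B s = (\<integral>\<alpha>. ?d s \<alpha> \<partial>F)" if "0 \<le> s" for s
    using utility_integrable[OF bound(1) that] utility_integrable[OF bound(2) that]
    by (simp add: qfun_eq_mean_utility mean_utility_def algebra_simps)
  have "?d t' \<alpha> \<le> ?d t \<alpha>" if "\<alpha> \<in> A" for \<alpha>
  proof -
    let ?k = "\<lambda>x. if r \<alpha> \<le> x then Hfun n G mu \<alpha> x else 0"
    have "(b - a) * ?k a \<le> utility \<alpha> b - utility \<alpha> a \<and> utility \<alpha> b - utility \<alpha> a \<le> (b - a) * ?k b"
      if "a \<le> b" for a b
      using integral_from_increment_bounds[OF Hfun_mono _ that] Hfun_bounds by (simp add: utility_def)
    then show ?thesis
      by (rule perspective_increment_antimono) (use w[OF \<open>\<alpha> \<in> A\<close>] t in auto)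
  qed
  then have "(\<integral>\<alpha>. ?d t' \<alpha> \<partial>F) \<le> (\<integral>\<alpha>. ?d t \<alpha> \<partial>F)"
    using integrable t by (intro integral_mono) (auto simp: space_F)
  then show ?thesis using diff t by simp
qed

lemma least_argmin_qfun_mono_weights:
  assumes S: "compact S" "S \<noteq> {}" "S \<subseteq> {0..}" and "0 \<le> \<omega>"
    and w: "\<And>\<alpha>. \<alpha> \<in> A \<Longrightarrow> 0 \<le> w \<bullet> \<alpha> \<and> w \<bullet> \<alpha> \<le> w' \<bullet> \<alpha> \<and> w' \<bullet> \<alpha> \<le> \<omega>"
  shows "least_argmin S (qfun n F G r mu w B) \<le> least_argmin S (qfun n F G r mu w' B)"
proof (rule least_argmin_mono[OF S(1,2)])
  have bound: "\<bar>w \<bullet> \<alpha>\<bar> \<le> \<omega>" "\<bar>w' \<bullet> \<alpha>\<bar> \<le> \<omega>" if "\<alpha> \<in> A" for \<alpha>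
    using w[OF that] by auto
  show "continuous_on S (qfun n F G r mu w B)" "continuous_on S (qfun n F G r mu w' B)"
    using continuous_on_subset[OF qfun_continuous_on[OF bound(1) \<open>0 \<le> \<omega>\<close>] S(3)]
      continuous_on_subset[OF qfun_continuous_on[OF bound(2) \<open>0 \<le> \<omega>\<close>] S(3)] by blast+
  show "qfun n F G r mu w' B t - qfun n F G r mu w B t \<le> qfun n F G r mu w' B s - qfun n F G r mu w B s"
    if "s \<in> S" "t \<in> S" "s \<le> t" for s t
    using S(3) that by (intro qfun_antitone_differences[OF w]) auto
qed

lemma least_argmin_qfun_antimono_budget:
  assumes S: "compact S" "S \<noteq> {}" "S \<subseteq> {0..}" and "0 \<le> \<omega>"
    and w: "\<And>\<alpha>. \<alpha> \<in> A \<Longrightarrow> \<bar>w \<bullet> \<alpha>\<bar> \<le> \<omega>" and "B \<le> B'"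
  shows "least_argmin S (qfun n F G r mu w B') \<le> least_argmin S (qfun n F G r mu w B)"
proof (rule least_argmin_mono[OF S(1,2)])
  show "continuous_on S (qfun n F G r mu w B')" "continuous_on S (qfun n F G r mu w B)"
    using continuous_on_subset[OF qfun_continuous_on[OF w \<open>0 \<le> \<omega>\<close>] S(3)] by blast+
  show "qfun n F G r mu w B t - qfun n F G r mu w B' t \<le> qfun n F G r mu w B s - qfun n F G r mu w B' s"
    if "s \<le> t" for s t
    using mult_right_mono[OF that, of "B' - B"] \<open>B \<le> B'\<close> by (simp add: qfun_eq_mean_utility algebra_simps)
qed

end

lemma ell_eq_least_argmin:
  "ell n F G r mu \<omega> Bmin w B = least_argmin {0 .. \<omega> / Bmin} (qfun n F G r mu w B)"
  by (simp add: ell_def least_argmin_def)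

theorem lemma3:
  fixes n :: nat and U Bmin \<omega> :: real
    and A :: "(real ^ 'd) set"
    and F :: "(real ^ 'd) measure" and f :: "real ^ 'd \<Rightarrow> ennreal"
    and G :: "((real ^ 'd) \<times> real) measure" and g :: "(real ^ 'd) \<times> real \<Rightarrow> ennreal"
    and r :: "real ^ 'd \<Rightarrow> real"
    and mu :: "(real ^ 'd) \<times> real \<Rightarrow> real"
  assumes n2: "n \<ge> 2"
    and d2: "CARD('d) \<ge> 2"
    and U_pos: "U > 0" and Bmin_pos: "Bmin > 0"
    and A_meas: "A \<in> sets lebesgue"
    and A_pos: "A \<subseteq> {\<alpha>. \<forall>i. 0 < \<alpha> $ i}"
    and F_dens: "F = density (lebesgue_on A) f" and f_meas: "f \<in> borel_measurable (lebesgue_on A)"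
    and F_prob: "prob_space F"
    and G_dens: "G = density (lebesgue_on (Theta U Bmin)) g"
    and g_meas: "g \<in> borel_measurable (lebesgue_on (Theta U Bmin))"
    and G_prob: "prob_space G"
    and omega_pos: "\<omega> > 0"
    and omega_bound: "\<forall>w \<in> Theta_w U. \<forall>\<alpha> \<in> A. w \<bullet> \<alpha> \<le> \<omega>"
    and r_meas: "r \<in> borel_measurable (lebesgue_on A)"
    and r_pos: "\<forall>\<alpha> \<in> A. r \<alpha> > 0"
    and mu_meas: "mu \<in> borel_measurable (lebesgue_on (Theta U Bmin))"
    and mu_range: "\<forall>\<theta> \<in> Theta U Bmin. mu \<theta> \<in> {0 .. \<omega> / Bmin}"
  shows
    "(\<forall>w w' B i. (w, B) \<in> Theta U Bmin \<and> (w', B) \<in> Theta U Bmin \<and>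
        (\<forall>j. j \<noteq> i \<longrightarrow> w' $ j = w $ j) \<and> w $ i \<le> w' $ i \<longrightarrow>
        ell n F G r mu \<omega> Bmin w B \<le> ell n F G r mu \<omega> Bmin w' B)
     \<and> (\<forall>w B B'. (w, B) \<in> Theta U Bmin \<and> (w, B') \<in> Theta U Bmin \<and> B \<le> B' \<longrightarrow>
        ell n F G r mu \<omega> Bmin w B' \<le> ell n F G r mu \<omega> Bmin w B)"
proof -
  have sets_F: "sets F = sets (lebesgue_on A)" and sets_G: "sets G = sets (lebesgue_on (Theta U Bmin))"
    by (simp_all add: F_dens G_dens)
  interpret pacing_model n F G r mu A "Theta U Bmin"
    by (rule pacing_model.intro[OF F_prob sets_F G_prob sets_G mu_meas r_meas]) (use r_pos in blast)
  have S: "compact {0 .. \<omega> / Bmin}" "{0 .. \<omega> / Bmin} \<noteq> {}" "{0 .. \<omega> / Bmin} \<subseteq> {0..}"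
    using omega_pos Bmin_pos by auto
  have inner_bounds: "0 \<le> w \<bullet> \<alpha> \<and> w \<bullet> \<alpha> \<le> \<omega>" if "w \<in> Theta_w U" "\<alpha> \<in> A" for w \<alpha>
    using inner_vec_mono[of 0 w \<alpha>] that A_pos omega_bound by (force simp: Theta_w_def less_imp_le)
  show ?thesis
    unfolding ell_eq_least_argmin
  proof (intro conjI allI impI)
    fix w w' :: "real ^ 'd" and B :: real and i :: 'd
    assume H: "(w, B) \<in> Theta U Bmin \<and> (w', B) \<in> Theta U Bmin \<and>
      (\<forall>j. j \<noteq> i \<longrightarrow> w' $ j = w $ j) \<and> w $ i \<le> w' $ i"
    have "w $ j \<le> w' $ j" for j using H by (cases "j = i") auto
    then have "w \<bullet> \<alpha> \<le> w' \<bullet> \<alpha>" if "\<alpha> \<in> A" for \<alpha>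
      by (rule inner_vec_mono) (use A_pos that in \<open>auto simp: less_imp_le\<close>)
    with H inner_bounds omega_pos show "least_argmin {0 .. \<omega> / Bmin} (qfun n F G r mu w B)
        \<le> least_argmin {0 .. \<omega> / Bmin} (qfun n F G r mu w' B)"
      by (intro least_argmin_qfun_mono_weights[OF S less_imp_le[OF omega_pos]]) (auto simp: Theta_def)
  next
    fix w :: "real ^ 'd" and B B' :: real
    assume "(w, B) \<in> Theta U Bmin \<and> (w, B') \<in> Theta U Bmin \<and> B \<le> B'"
    with inner_bounds omega_pos show "least_argmin {0 .. \<omega> / Bmin} (qfun n F G r mu w B')
        \<le> least_argmin {0 .. \<omega> / Bmin} (qfun n F G r mu w B)"
      by (intro least_argmin_qfun_antimono_budget[OF S less_imp_le[OF omega_pos]]) (auto simp: Theta_def)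
  qed
qed

end
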